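(* Consider the two-sided market model described in the context with $\phi(x)=x^\theta$ for some $0<\theta<1$, and suppose $a>\zeta$, where $$\zeta=\max\Big\{\tfrac{1}{2}\big(\tfrac{\gamma-2}{\gamma-1}\phi'(\bar Yx_0)+\lambda\big)\bar X,\ \tfrac{1}{2}\big(\textstyle\int_{x_0}^{\infty}\phi'(x\bar Y)x^{1-\gamma}dx+\lambda \bar X\big)\Big\}.$$ Let $y^*>y_0$ be the revenue-maximizing CP threshold, i.e. the solution of $g(y^* )=a$, and let $\widehat y>y_0$ be the welfare-maximizing CP threshold, i.e. the solution of $h(\widehat y)=a$. Then $\widehat y<y^*$.
   Context: Model: fix $\gamma>2$, $\beta>2$, $\lambda>0$, $a\ge0$. Consumer types have density $x^{-\gamma}$ on $x\ge x_0:=(\frac{1}{\gamma-1})^{\frac{1}{\gamma-1}}$, CP types density $y^{-\beta}$ on $y\ge y_0:=(\frac{1}{\beta-1})^{\frac{1}{\beta-1}}$. Let $Y(s)=\int_s^\infty y^{1-\beta}dy$, $\bar X=\int_{x_0}^\infty x^{1-\gamma}dx$, $\bar Y=Y(y_0)$. Define for $y\ge y_0$: $g(y)=\frac12\big(\frac{\gamma-2}{\gamma-1}\phi'(x_0\sqrt{\bar Y Y(y)})+\lambda\big)\frac{\bar X\sqrt{\bar Y}}{\sqrt{Y(y)}}$ and $h(y)=\frac12\big(\int_{x_0}^\infty\phi'(x\sqrt{\bar Y Y(y)})x^{1-\gamma}dx+\lambda\bar X\big)\frac{\sqrt{\bar Y}}{\sqrt{Y(y)}}$. Interpretation: with all consumers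 participating and CPs of type $\ge y$ participating, $g(y)=a$ is the first-order condition for the ISP's revenue $\phi(x_0\sqrt{\bar YY(y)})+\lambda\bar X\sqrt{\bar Y Y(y)}-aY(y)$ (membership fee and CP fee set so threshold types are indifferent), and $h(y)=a$ is the first-order condition for the social welfare $\int_{x_0}^\infty\phi(x\sqrt{\bar YY(y)})x^{-\gamma}dx+\lambda\bar X\sqrt{\bar YY(y)}-aY(y)$. Both $g$ and $h$ are increasing in $y$. *)

theory Defs
  imports "HOL-Analysis.Analysis"
begin

text \<open>Lower end of the consumer type support.\<close>
definition x0 :: "real \<Rightarrow> real" where
  "x0 \<gamma> = (1 / (\<gamma> - 1)) powr (1 / (\<gamma> - 1))"

text \<open>Lower end of the CP type support.\<close>
definition y0 :: "real \<Rightarrow> real" where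
  "y0 \<beta> = (1 / (\<beta> - 1)) powr (1 / (\<beta> - 1))"

definition Ycp :: "real \<Rightarrow> real \<Rightarrow> real" where
  "Ycp \<beta> s = integral {s..} (\<lambda>y. y powr (1 - \<beta>))"

definition Xbar :: "real \<Rightarrow> real" where
  "Xbar \<gamma> = integral {x0 \<gamma>..} (\<lambda>x. x powr (1 - \<gamma>))"

definition Ybar :: "real \<Rightarrow> real" where
  "Ybar \<beta> = Ycp \<beta> (y0 \<beta>)"

text \<open>First-order condition function for ISP revenue; dphi is the derivative of phi.\<close>
definition gfun :: "(real \<Rightarrow> real) \<Rightarrow> real \<Rightarrow> real \<Rightarrow> real \<Rightarrow> real \<Rightarrow> real" where
  "gfun dphi \<gamma> \<beta> lam y =
     1/2 * ((\<gamma> - 2) / (\<gamma> - 1) * dphi (x0 \<gamma> * sqrt (Ybar \<beta> * Ycp \<beta> y)) + lam)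
         * Xbar \<gamma> * sqrt (Ybar \<beta>) / sqrt (Ycp \<beta> y)"

text \<open>First-order condition function for social welfare.\<close>
definition hfun :: "(real \<Rightarrow> real) \<Rightarrow> real \<Rightarrow> real \<Rightarrow> real \<Rightarrow> real \<Rightarrow> real" where
  "hfun dphi \<gamma> \<beta> lam y =
     1/2 * (integral {x0 \<gamma>..} (\<lambda>x. dphi (x * sqrt (Ybar \<beta> * Ycp \<beta> y)) * x powr (1 - \<gamma>))
            + lam * Xbar \<gamma>)
         * sqrt (Ybar \<beta>) / sqrt (Ycp \<beta> y)"

definition zeta :: "(real \<Rightarrow> real) \<Rightarrow> real \<Rightarrow> real \<Rightarrow> real \<Rightarrow> real" where
  "zeta dphi \<gamma> \<beta> lam =
     max (1/2 * ((\<gamma> - 2) / (\<gamma> - 1) * dphi (Ybar \<beta> * x0 \<gamma>) + lam) * Xbar \<gamma>)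
         (1/2 * (integral {x0 \<gamma>..} (\<lambda>x. dphi (x * Ybar \<beta>) * x powr (1 - \<gamma>)) + lam * Xbar \<gamma>))"

end

theory Submission
  imports Defs
begin

text \<open>
  Since \<open>\<phi>' = \<theta> x powr (\<theta> - 1)\<close> is nonnegative and decreasing and \<open>Y\<close> is decreasing, \<open>g\<close> is
  increasing. For the power function both consumer terms are explicit: with
  \<open>S = sqrt (Ybar * Y y)\<close>, the \<open>\<phi>'\<close>-term of \<open>g\<close> times \<open>Xbar\<close> is
  \<open>\<theta> S powr (\<theta> - 1) x0 powr (\<theta> + 1 - \<gamma>) / (\<gamma> - 1)\<close>, while the integral in \<open>h\<close> is the same
  quantity divided by \<open>\<gamma> - 1 - \<theta>\<close> instead. Hence \<open>g < h\<close> pointwise, so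
  \<open>g yhat < h yhat = a = g ystar\<close>, and monotonicity of \<open>g\<close> gives \<open>yhat < ystar\<close>.
\<close>

lemma integral_powr_to_inf:
  fixes a e :: real
  assumes "e < -1" "a > 0"
  shows "integral {a..} (\<lambda>x. x powr e) = a powr (e + 1) / (- e - 1)"
proof -
  have "integral {a..} (\<lambda>x. x powr e) = - (a powr (e + 1)) / (e + 1)"
    using has_integral_powr_to_inf[OF assms] by (rule integral_unique)
  then show ?thesis
    by (simp add: minus_divide_right)
qed

lemma x0_pos: "\<gamma> > 1 \<Longrightarrow> x0 \<gamma> > 0"
  unfolding x0_def by simp

lemma y0_pos: "\<beta> > 1 \<Longrightarrow> y0 \<beta> > 0"
  unfolding y0_def by simp

lemma Ycp_eq: "s > 0 \<Longrightarrow> \<beta> > 2 \<Longrightarrow> Ycp \<beta> s = s powr (2 - \<beta>) / (\<beta> - 2)"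
  unfolding Ycp_def by (subst integral_powr_to_inf) simp_all

lemma Xbar_eq: "\<gamma> > 2 \<Longrightarrow> Xbar \<gamma> = x0 \<gamma> powr (2 - \<gamma>) / (\<gamma> - 2)"
  unfolding Xbar_def by (subst integral_powr_to_inf) (simp_all add: x0_pos)

lemma Xbar_pos: "\<gamma> > 2 \<Longrightarrow> Xbar \<gamma> > 0"
  using x0_pos[of \<gamma>] by (simp add: Xbar_eq)

lemma Ycp_pos: "s > 0 \<Longrightarrow> \<beta> > 2 \<Longrightarrow> Ycp \<beta> s > 0"
  by (simp add: Ycp_eq)

lemma Ybar_pos: "\<beta> > 2 \<Longrightarrow> Ybar \<beta> > 0"
  unfolding Ybar_def by (simp add: Ycp_pos y0_pos)

lemma Ycp_antimono: "0 < s \<Longrightarrow> s \<le> t \<Longrightarrow> \<beta> > 2 \<Longrightarrow> Ycp \<beta> t \<le> Ycp \<beta> s"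
  by (simp add: Ycp_eq divide_right_mono powr_mono2')

lemma deriv_powr: "z > 0 \<Longrightarrow> deriv (\<lambda>x. x powr \<theta>) z = \<theta> * z powr (\<theta> - 1)"
  for z \<theta> :: real
  by (rule DERIV_imp_deriv) (rule has_real_derivative_powr)

lemma deriv_powr_nonneg: "0 \<le> \<theta> \<Longrightarrow> z > 0 \<Longrightarrow> 0 \<le> deriv (\<lambda>x. x powr \<theta>) z"
  for z \<theta> :: real
  by (simp add: deriv_powr)

lemma deriv_powr_antimono:
  fixes u v \<theta> :: real
  assumes "0 \<le> \<theta>" "\<theta> \<le> 1" "0 < u" "u \<le> v"
  shows "deriv (\<lambda>x. x powr \<theta>) v \<le> deriv (\<lambda>x. x powr \<theta>) u"
  using assms by (simp add: deriv_powr mult_left_mono powr_mono2')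

lemma gfun_mono:
  assumes dphi_nonneg: "\<And>u. 0 < u \<Longrightarrow> 0 \<le> dphi u"
    and dphi_antimono: "\<And>u v. 0 < u \<Longrightarrow> u \<le> v \<Longrightarrow> dphi v \<le> dphi u"
    and "\<gamma> > 2" "\<beta> > 2" "lam \<ge> 0" "y0 \<beta> < y1" "y1 \<le> y2"
  shows "gfun dphi \<gamma> \<beta> lam y1 \<le> gfun dphi \<gamma> \<beta> lam y2"
proof -
  define F where "F y = (\<gamma> - 2) / (\<gamma> - 1) * dphi (x0 \<gamma> * sqrt (Ybar \<beta> * Ycp \<beta> y)) + lam" for y
  define B where "B y = sqrt (Ybar \<beta>) / sqrt (Ycp \<beta> y)" for y
  have gfun_eq: "gfun dphi \<gamma> \<beta> lam y = 1/2 * Xbar \<gamma> * (F y * B y)" for y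
    by (simp add: gfun_def F_def B_def)
  have y1_pos: "y1 > 0" and y2_pos: "y2 > 0"
    using assms y0_pos[of \<beta>] by auto
  have Y_le: "Ycp \<beta> y2 \<le> Ycp \<beta> y1"
    using Ycp_antimono y1_pos assms by auto
  have Y2_pos: "Ycp \<beta> y2 > 0"
    using Ycp_pos y2_pos assms by auto
  have arg_pos: "x0 \<gamma> * sqrt (Ybar \<beta> * Ycp \<beta> y2) > 0"
    using x0_pos Ybar_pos Y2_pos assms by simp
  have "dphi (x0 \<gamma> * sqrt (Ybar \<beta> * Ycp \<beta> y1)) \<le> dphi (x0 \<gamma> * sqrt (Ybar \<beta> * Ycp \<beta> y2))"
    using arg_pos Y_le Ybar_pos x0_pos assms
    by (intro dphi_antimono) (auto intro!: mult_left_mono)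
  then have "F y1 \<le> F y2"
    unfolding F_def using assms by (intro add_right_mono mult_left_mono) auto
  moreover have "B y1 \<le> B y2"
    unfolding B_def using Y_le Y2_pos Ybar_pos[OF assms(4)] by (simp add: divide_left_mono)
  moreover have "0 \<le> F y1" "0 \<le> B y1"
    unfolding F_def B_def using arg_pos assms y1_pos Ycp_pos[of y1 \<beta>] Ybar_pos[of \<beta>] x0_pos[of \<gamma>]
    by (auto intro!: dphi_nonneg)
  ultimately have "F y1 * B y1 \<le> F y2 * B y2"
    by (rule mult_mono')
  then show ?thesis
    unfolding gfun_eq using Xbar_pos[of \<gamma>] \<open>\<gamma> > 2\<close> by (simp add: mult_left_mono)
qed

lemma integral_deriv_powr_scaled:
  fixes c S \<gamma> \<theta> :: real
  assumes "c > 0" "S > 0" "\<theta> + 1 < \<gamma>"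
  shows "integral {c..} (\<lambda>x. deriv (\<lambda>x. x powr \<theta>) (x * S) * x powr (1 - \<gamma>))
     = \<theta> * S powr (\<theta> - 1) * c powr (\<theta> + 1 - \<gamma>) / (\<gamma> - 1 - \<theta>)"
proof -
  have integrand_eq: "deriv (\<lambda>x. x powr \<theta>) (x * S) * x powr (1 - \<gamma>)
      = \<theta> * S powr (\<theta> - 1) * x powr (\<theta> - \<gamma>)" if "x \<in> {c..}" for x
  proof -
    have "x > 0"
      using that assms by auto
    then have "deriv (\<lambda>x. x powr \<theta>) (x * S) * x powr (1 - \<gamma>)
        = \<theta> * S powr (\<theta> - 1) * (x powr (\<theta> - 1) * x powr (1 - \<gamma>))"
      using assms by (simp add: deriv_powr powr_mult)
    also have "x powr (\<theta> - 1) * x powr (1 - \<gamma>) = x powr (\<theta> - \<gamma>)"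
      by (simp add: powr_add[symmetric])
    finally show ?thesis .
  qed
  have "integral {c..} (\<lambda>x. deriv (\<lambda>x. x powr \<theta>) (x * S) * x powr (1 - \<gamma>))
      = integral {c..} (\<lambda>x. \<theta> * S powr (\<theta> - 1) * x powr (\<theta> - \<gamma>))"
    by (rule integral_cong) (rule integrand_eq)
  also have "\<dots> = \<theta> * S powr (\<theta> - 1) * integral {c..} (\<lambda>x. x powr (\<theta> - \<gamma>))"
    by (rule integral_mult_right)
  also have "integral {c..} (\<lambda>x. x powr (\<theta> - \<gamma>)) = c powr (\<theta> + 1 - \<gamma>) / (\<gamma> - 1 - \<theta>)"
    using assms integral_powr_to_inf[of "\<theta> - \<gamma>" c] by (simp add: algebra_simps)
  finally show ?thesis
    by simp
qed

lemma gfun_less_hfun_powr: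
  fixes \<theta> :: real
  assumes "\<gamma> > 2" "\<beta> > 2" "0 < \<theta>" "\<theta> < 1" "y0 \<beta> < y"
  shows "gfun (deriv (\<lambda>x. x powr \<theta>)) \<gamma> \<beta> lam y < hfun (deriv (\<lambda>x. x powr \<theta>)) \<gamma> \<beta> lam y"
proof -
  define S where "S = sqrt (Ybar \<beta> * Ycp \<beta> y)"
  define B where "B = sqrt (Ybar \<beta>) / sqrt (Ycp \<beta> y)"
  define D where "D = deriv (\<lambda>x. x powr \<theta>) (x0 \<gamma> * S)"
  define I where "I = integral {x0 \<gamma>..} (\<lambda>x. deriv (\<lambda>x. x powr \<theta>) (x * S) * x powr (1 - \<gamma>))"
  define K where "K = \<theta> * S powr (\<theta> - 1) * x0 \<gamma> powr (\<theta> + 1 - \<gamma>)"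
  have x0_gamma_pos: "x0 \<gamma> > 0"
    using assms x0_pos by simp
  have "Ycp \<beta> y > 0"
    using assms y0_pos[of \<beta>] by (intro Ycp_pos) auto
  then have S_pos: "S > 0" and B_pos: "B > 0"
    unfolding S_def B_def using Ybar_pos assms by auto
  have scale_identity: "(\<gamma> - 2) / (\<gamma> - 1) * (\<theta> * (P * Q)) * (R / (\<gamma> - 2)) = \<theta> * Q * (P * R) / (\<gamma> - 1)"
    for P Q R :: real
    using assms by (simp add: divide_simps)
  have K_pos: "K > 0"
    unfolding K_def using S_pos x0_gamma_pos assms by simp
  have "(\<gamma> - 2) / (\<gamma> - 1) * D * Xbar \<gamma>
      = (\<gamma> - 2) / (\<gamma> - 1) * (\<theta> * (x0 \<gamma> powr (\<theta> - 1) * S powr (\<theta> - 1)))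
        * (x0 \<gamma> powr (2 - \<gamma>) / (\<gamma> - 2))"
    unfolding D_def using x0_gamma_pos S_pos \<open>\<gamma> > 2\<close> by (simp add: deriv_powr powr_mult Xbar_eq)
  also have "\<dots> = \<theta> * S powr (\<theta> - 1) * (x0 \<gamma> powr (\<theta> - 1) * x0 \<gamma> powr (2 - \<gamma>)) / (\<gamma> - 1)"
    by (rule scale_identity)
  also have "\<dots> = K / (\<gamma> - 1)"
    using powr_add[of "x0 \<gamma>" "\<theta> - 1" "2 - \<gamma>"] by (simp add: K_def algebra_simps)
  also have "\<dots> < K / (\<gamma> - 1 - \<theta>)"
    using K_pos assms by (intro divide_strict_left_mono) auto
  also have "\<dots> = I"
    unfolding I_def K_def using assms S_pos x0_gamma_pos by (simp add: integral_deriv_powr_scaled)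
  finally have "((\<gamma> - 2) / (\<gamma> - 1) * D + lam) * Xbar \<gamma> < I + lam * Xbar \<gamma>"
    by (simp add: distrib_right)
  then have "((\<gamma> - 2) / (\<gamma> - 1) * D + lam) * Xbar \<gamma> * B < (I + lam * Xbar \<gamma>) * B"
    using B_pos by (rule mult_strict_right_mono)
  moreover have "gfun (deriv (\<lambda>x. x powr \<theta>)) \<gamma> \<beta> lam y = 1/2 * (((\<gamma> - 2) / (\<gamma> - 1) * D + lam) * Xbar \<gamma> * B)"
    unfolding gfun_def D_def B_def S_def by simp
  moreover have "hfun (deriv (\<lambda>x. x powr \<theta>)) \<gamma> \<beta> lam y = 1/2 * ((I + lam * Xbar \<gamma>) * B)"
    unfolding hfun_def I_def B_def S_def by simp
  ultimately show ?thesis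
    by simp
qed

theorem theorem4:
  fixes \<gamma> \<beta> lam a \<theta> ystar yhat :: real
  assumes "\<gamma> > 2" and "\<beta> > 2" and "lam > 0" and "a \<ge> 0"
    and "0 < \<theta>" and "\<theta> < 1"
    and "a > zeta (deriv (\<lambda>x. x powr \<theta>)) \<gamma> \<beta> lam"
    and "ystar > y0 \<beta>" and "gfun (deriv (\<lambda>x. x powr \<theta>)) \<gamma> \<beta> lam ystar = a"
    and "yhat > y0 \<beta>" and "hfun (deriv (\<lambda>x. x powr \<theta>)) \<gamma> \<beta> lam yhat = a"
  shows "yhat < ystar"
proof (rule ccontr)
  \<comment> \<open>The bounds on \<open>a\<close> only serve to make the thresholds exist; here they are given.\<close>
  let ?g = "gfun (deriv (\<lambda>x. x powr \<theta>)) \<gamma> \<beta> lam"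
  assume "\<not> yhat < ystar"
  then have "?g ystar \<le> ?g yhat"
    using assms(1-3,5,6,8) by (intro gfun_mono deriv_powr_nonneg deriv_powr_antimono) auto
  also have "?g yhat < hfun (deriv (\<lambda>x. x powr \<theta>)) \<gamma> \<beta> lam yhat"
    using assms(1,2,5,6,10) by (rule gfun_less_hfun_powr)
  finally show False
    using assms(9,11) by simp
qed

end
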